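(* Let $k\leqslant 2$ and let $F\subseteq S^d$ be a $k$-neighborly family which is a partition. Then $F$ is a lamination, i.e., there exists $i\in[d]$ such that every string in $F$ has symbol $0$ or $1$ (not a joker) in position $i$.
   Context: Let $S=\{0,1,\ast\}$ and let $S^d$ be the set of strings of length $d$ over $S$; the symbol $\ast$ is called a joker, and $j(x)$ denotes the number of jokers in $x\in S^d$. For $x,y\in S^d$, $d(x,y)$ is the number of positions $i\in[d]$ such that one of $x_i,y_i$ equals $0$ and the other equals $1$. A family $F\subseteq S^d$ is $k$-neighborly if $1\leqslant d(x,y)\leqslant k$ for all distinct $x,y\in F$. A $k$-neighborly family $F$ is a partition if $\sum_{x\in F}2^{j(x)}=2^d$. For $s\in S$ and $i\in[d]$, $F^{i,s}$ denotes the set of strings in $F$ having symbol $s$ at position $i$. A family $F\subseteq S^d$ is a lamination if it is a partition and $F=F^{i,0}\cup F^{i,1}$ for some $i\in[d]$. *)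

theory Defs
  imports Main
begin

datatype sym = Zero | One | Joker

definition strings :: "nat \<Rightarrow> sym list set" where
  "strings d = {x. length x = d}"

definition jokers :: "sym list \<Rightarrow> nat" where
  "jokers x = length (filter (\<lambda>s. s = Joker) x)"

definition dist :: "sym list \<Rightarrow> sym list \<Rightarrow> nat" where
  "dist x y = card {i. i < length x \<and> i < length y \<and>
      ((x ! i = Zero \<and> y ! i = One) \<or> (x ! i = One \<and> y ! i = Zero))}"

definition neighborly :: "nat \<Rightarrow> nat \<Rightarrow> sym list set \<Rightarrow> bool" where
  "neighborly k d F \<longleftrightarrow> F \<subseteq> strings d \<and>
     (\<forall>x\<in>F. \<forall>y\<in>F. x \<noteq> y \<longrightarrow> 1 \<le> dist x y \<and> dist x y \<le> k)"

definition is_partition :: "nat \<Rightarrow> nat \<Rightarrow> sym list set \<Rightarrow> bool" where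
  "is_partition k d F \<longleftrightarrow> neighborly k d F \<and> (\<Sum>x\<in>F. (2::nat) ^ jokers x) = 2 ^ d"

definition lamination :: "nat \<Rightarrow> nat \<Rightarrow> sym list set \<Rightarrow> bool" where
  "lamination k d F \<longleftrightarrow> is_partition k d F \<and>
     (\<exists>i<d. \<forall>x\<in>F. x ! i = Zero \<or> x ! i = One)"

end

theory Submission
  imports Defs
begin

text \<open>A string u stands for the subcube of \<open>{0,1}\<^sup>d\<close> obtained by filling in its jokers, and a
  neighborly partition is a tiling of the cube by such subcubes. Take y \<in> F with the fewest jokers and
  let S be its set of non-joker positions. The character \<open>\<chi>\<^sub>S\<close> sums to zero over the cube, and
  over the subcube of u it sums to zero unless u has no joker in S; by minimality of y this forces u
  to have exactly the non-joker positions S, and then the sum is \<open>\<chi>\<^sub>S(u)\<close> times the size of the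
  subcube, which is the same for all such u. Hence some z \<in> F with the same non-joker positions has
  \<open>\<chi>\<^sub>S(z) \<noteq> \<chi>\<^sub>S(y)\<close>, i.e. y and z conflict in an odd number of positions, hence in exactly one
  position i when k \<le> 2. Replacing y and z by y with a joker at i gives a neighborly partition with
  one string less; by induction on \<open>|F|\<close> it has a joker-free coordinate, and that coordinate is
  joker-free in F as well.\<close>

definition opposite :: "sym \<Rightarrow> sym \<Rightarrow> bool" where
  "opposite a b \<longleftrightarrow> (a = Zero \<and> b = One) \<or> (a = One \<and> b = Zero)"

definition conflicts :: "sym list \<Rightarrow> sym list \<Rightarrow> nat set" where
  "conflicts x y = {i. i < length x \<and> i < length y \<and> opposite (x ! i) (y ! i)}"

lemma finite_conflicts [simp]: "finite (conflicts x y)"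
  by (simp add: conflicts_def)

lemma dist_eq_card_conflicts: "dist x y = card (conflicts x y)"
  by (simp add: dist_def conflicts_def opposite_def)

lemma one_le_dist_iff: "1 \<le> dist x y \<longleftrightarrow> conflicts x y \<noteq> {}"
  by (simp add: dist_eq_card_conflicts Suc_le_eq card_gt_0_iff)

lemma conflicts_commute: "conflicts x y = conflicts y x"
  by (auto simp: conflicts_def opposite_def)

lemma conflicts_self [simp]: "conflicts x x = {}"
  by (auto simp: conflicts_def opposite_def)

lemma sym_neq_Joker_iff: "a \<noteq> Joker \<longleftrightarrow> a = Zero \<or> a = One"
  by (cases a) auto

fun flip :: "sym \<Rightarrow> sym" where
  "flip Zero = One" | "flip One = Zero" | "flip Joker = Joker"

lemma flip_eq_Joker_iff [simp]: "flip a = Joker \<longleftrightarrow> a = Joker"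
  by (cases a) auto

lemma flip_flip [simp]: "flip (flip a) = a"
  by (cases a) auto

lemma not_opposite_both_flip: "opposite a b \<Longrightarrow> opposite (flip a) b \<Longrightarrow> False"
  by (cases a) (auto simp: opposite_def)

lemma update_flip_neq: "i < length y \<Longrightarrow> y ! i \<noteq> Joker \<Longrightarrow> y[i := flip (y ! i)] \<noteq> y"
  by (metis flip.simps(1,2) nth_list_update_eq sym.distinct(1) sym_neq_Joker_iff)

lemma jokers_Cons: "jokers (a # u) = (if a = Joker then Suc (jokers u) else jokers u)"
  by (simp add: jokers_def)

lemma jokers_replicate_Joker: "jokers (replicate d Joker) = d"
  by (simp add: jokers_def)

lemma jokers_update_Joker:
  "i < length y \<Longrightarrow> y ! i \<noteq> Joker \<Longrightarrow> jokers (y[i := Joker]) = Suc (jokers y)"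
  by (induction y arbitrary: i) (auto simp: jokers_Cons split: nat.splits)

lemma jokers_update_flip: "jokers (y[i := flip (y ! i)]) = jokers y"
  by (induction y arbitrary: i) (auto simp: jokers_Cons split: nat.splits)

definition fixed :: "sym list \<Rightarrow> nat set" where
  "fixed u = {i. i < length u \<and> u ! i \<noteq> Joker}"

lemma finite_fixed [simp]: "finite (fixed u)"
  by (simp add: fixed_def)

lemma card_fixed_add_jokers: "card (fixed u) + jokers u = length u"
proof -
  have "jokers u = card {i. i < length u \<and> u ! i = Joker}"
    by (simp add: jokers_def length_filter_conv_card)
  moreover have "fixed u \<union> {i. i < length u \<and> u ! i = Joker} = {..<length u}"
    by (auto simp: fixed_def)
  moreover have "card (fixed u \<union> {i. i < length u \<and> u ! i = Joker})
      = card (fixed u) + card {i. i < length u \<and> u ! i = Joker}"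
    by (rule card_Un_disjoint) (auto simp: fixed_def)
  ultimately show ?thesis by simp
qed

fun subcube :: "sym list \<Rightarrow> sym list set" where
  "subcube [] = {[]}"
| "subcube (a # u) =
     (if a = Joker then Cons Zero ` subcube u \<union> Cons One ` subcube u else Cons a ` subcube u)"

abbreviation cube :: "nat \<Rightarrow> sym list set" where
  "cube d \<equiv> subcube (replicate d Joker)"

lemma mem_subcube_iff:
  "v \<in> subcube u \<longleftrightarrow>
     length v = length u \<and> (\<forall>i<length u. v ! i \<noteq> Joker \<and> (u ! i \<noteq> Joker \<longrightarrow> v ! i = u ! i))"
proof (induction u arbitrary: v)
  case Nil
  then show ?case by auto
next
  case (Cons a u)
  show ?case
  proof (cases v)
    case Nil
    then show ?thesis by auto
  next
    case (Cons b w)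
    have "v \<in> subcube (a # u) \<longleftrightarrow> (b \<noteq> Joker \<and> (a \<noteq> Joker \<longrightarrow> b = a)) \<and> w \<in> subcube u"
      unfolding Cons by (cases a; cases b) auto
    then show ?thesis
      using Cons.IH unfolding Cons by (auto simp: less_Suc_eq_0_disj)
  qed
qed

lemma finite_subcube [simp]: "finite (subcube u)"
  by (induction u) auto

lemma card_subcube: "card (subcube u) = 2 ^ jokers u"
proof (induction u)
  case Nil
  then show ?case by (simp add: jokers_def)
next
  case (Cons a u)
  have "card (Cons Zero ` subcube u \<union> Cons One ` subcube u)
      = card (Cons Zero ` subcube u) + card (Cons One ` subcube u)"
    by (rule card_Un_disjoint) auto
  then show ?case
    using Cons.IH by (simp add: jokers_Cons card_image)
qed

lemma subcube_disjoint: "conflicts u w \<noteq> {} \<Longrightarrow> subcube u \<inter> subcube w = {}"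
  by (fastforce simp: conflicts_def opposite_def mem_subcube_iff)

lemma subcube_subset_cube: "length u = d \<Longrightarrow> subcube u \<subseteq> cube d"
  by (auto simp: mem_subcube_iff)

lemma partition_finite:
  assumes "is_partition k d F"
  shows "finite F"
proof (rule ccontr)
  assume "infinite F"
  then show False
    using assms by (simp add: is_partition_def)
qed

lemma partition_lengths: "is_partition k d F \<Longrightarrow> u \<in> F \<Longrightarrow> length u = d"
  by (auto simp: is_partition_def neighborly_def strings_def)

lemma partition_conflicts:
  "is_partition k d F \<Longrightarrow> u \<in> F \<Longrightarrow> w \<in> F \<Longrightarrow> u \<noteq> w \<Longrightarrow>
     conflicts u w \<noteq> {} \<and> card (conflicts u w) \<le> k"
  by (simp add: is_partition_def neighborly_def dist_eq_card_conflicts flip: one_le_dist_iff)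

lemma partition_subcubes_disjoint:
  "is_partition k d F \<Longrightarrow> u \<in> F \<Longrightarrow> w \<in> F \<Longrightarrow> u \<noteq> w \<Longrightarrow> subcube u \<inter> subcube w = {}"
  by (simp add: partition_conflicts subcube_disjoint)

lemma partition_tiles_cube:
  assumes "is_partition k d F"
  shows "(\<Union>u\<in>F. subcube u) = cube d"
proof (rule card_subset_eq)
  show "(\<Union>u\<in>F. subcube u) \<subseteq> cube d"
    using partition_lengths[OF assms] subcube_subset_cube by blast
  have "card (\<Union>u\<in>F. subcube u) = (\<Sum>u\<in>F. card (subcube u))"
    using partition_finite[OF assms] partition_subcubes_disjoint[OF assms] by (intro card_UN_disjoint) auto
  also have "\<dots> = 2 ^ d"
    using assms by (simp add: card_subcube is_partition_def)
  finally show "card (\<Union>u\<in>F. subcube u) = card (cube d)"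
    by (simp add: card_subcube jokers_replicate_Joker)
qed simp

lemma sum_over_partition:
  assumes "is_partition k d F"
  shows "sum f (cube d) = (\<Sum>u\<in>F. sum f (subcube u))"
  unfolding partition_tiles_cube[OF assms, symmetric]
  using partition_finite[OF assms] partition_subcubes_disjoint[OF assms] by (intro sum.UNION_disjoint) auto

definition character :: "nat set \<Rightarrow> sym list \<Rightarrow> int" where
  "character S v = (-1) ^ card {i\<in>S. v ! i = One}"

lemma character_nonzero [simp]: "character S v \<noteq> 0"
  by (simp add: character_def)

lemma sum_character_subcube_eq_0:
  assumes "finite S" and "i \<in> S" and "i < length u" and "u ! i = Joker"
  shows "sum (character S) (subcube u) = 0"
proof -
  define toggle where "toggle v = v[i := flip (v ! i)]" for v
  have toggle_mem: "toggle v \<in> subcube u" and toggle_toggle: "toggle (toggle v) = v"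
    if "v \<in> subcube u" for v
    using that assms(3,4) by (auto simp: toggle_def mem_subcube_iff nth_list_update)
  have toggle_sign: "character S (toggle v) = - character S v" if "v \<in> subcube u" for v
  proof -
    have "i < length v" and "v ! i \<noteq> Joker"
      using that assms(3) by (auto simp: mem_subcube_iff)
    then consider "v ! i = One" | "v ! i = Zero"
      by (cases "v ! i") auto
    then show ?thesis
    proof cases
      case 1
      then have "{j\<in>S. v ! j = One} = insert i {j\<in>S. toggle v ! j = One}"
        and "i \<notin> {j\<in>S. toggle v ! j = One}"
        using \<open>i < length v\<close> assms(2) by (auto simp: toggle_def nth_list_update)
      then show ?thesis
        using assms(1) by (simp add: character_def)
    next
      case 2
      then have "{j\<in>S. toggle v ! j = One} = insert i {j\<in>S. v ! j = One}"
        and "i \<notin> {j\<in>S. v ! j = One}"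
        using \<open>i < length v\<close> assms(2) by (auto simp: toggle_def nth_list_update)
      then show ?thesis
        using assms(1) by (simp add: character_def)
    qed
  qed
  have "sum (character S) (subcube u) = sum (\<lambda>v. - character S v) (subcube u)"
    by (rule sum.reindex_bij_witness[of _ toggle toggle]) (auto simp: toggle_mem toggle_toggle toggle_sign)
  then show ?thesis
    by (simp add: sum_negf)
qed

lemma sum_character_subcube:
  assumes "S \<subseteq> fixed u"
  shows "sum (character S) (subcube u) = 2 ^ jokers u * character S u"
proof -
  have "character S v = character S u" if "v \<in> subcube u" for v
  proof -
    have "{j\<in>S. v ! j = One} = {j\<in>S. u ! j = One}"
      using that assms by (auto simp: mem_subcube_iff fixed_def)
    then show ?thesis
      by (simp add: character_def)
  qed
  then show ?thesis
    by (simp add: card_subcube)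
qed

lemma partition_fixed_nonempty:
  assumes "is_partition k d F" and "2 \<le> card F" and "y \<in> F"
  shows "fixed y \<noteq> {}"
proof
  assume "fixed y = {}"
  then have "jokers y = d"
    using card_fixed_add_jokers[of y] partition_lengths[OF assms(1,3)] by simp
  have "\<not> F \<subseteq> {y}"
    using assms(2) card_mono[of "{y}" F] by auto
  then obtain u where "u \<in> F" and "u \<noteq> y"
    by blast
  have "(2::nat) ^ jokers y + 2 ^ jokers u = (\<Sum>x\<in>{y, u}. 2 ^ jokers x)"
    using \<open>u \<noteq> y\<close> by simp
  also have "\<dots> \<le> (\<Sum>x\<in>F. 2 ^ jokers x)"
    using partition_finite[OF assms(1)] \<open>u \<in> F\<close> assms(3) by (intro sum_mono2) auto
  also have "\<dots> = 2 ^ d"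
    using assms(1) by (simp add: is_partition_def)
  finally show False
    using \<open>jokers y = d\<close> by simp
qed

lemma partition_character_sum_eq_0:
  assumes P: "is_partition k d F" and "y \<in> F"
    and min: "\<And>u. u \<in> F \<Longrightarrow> jokers y \<le> jokers u" and "fixed y \<noteq> {}"
  shows "(\<Sum>u | u \<in> F \<and> fixed u = fixed y. character (fixed y) u) = 0"
proof -
  define S where "S = fixed y"
  have subcube_sum: "sum (character S) (subcube u)
      = (if fixed u = S then 2 ^ jokers y * character S u else 0)" if "u \<in> F" for u
  proof (cases "S \<subseteq> fixed u")
    case True
    have "card (fixed u) + jokers u = card S + jokers y"
      using card_fixed_add_jokers[of u] card_fixed_add_jokers[of y]
        partition_lengths[OF P that] partition_lengths[OF P \<open>y \<in> F\<close>] by (simp add: S_def)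
    then have "fixed u = S" and "jokers u = jokers y"
      using True min[OF that] card_seteq[OF finite_fixed True] by (auto simp: le_antisym)
    then show ?thesis
      using sum_character_subcube[OF True] by simp
  next
    case False
    then obtain j where "j \<in> S" and "j \<notin> fixed u"
      by blast
    moreover have "j < length u"
      using \<open>j \<in> S\<close> partition_lengths[OF P that] partition_lengths[OF P \<open>y \<in> F\<close>]
      by (simp add: S_def fixed_def)
    ultimately show ?thesis
      using False sum_character_subcube_eq_0[of S j u] by (auto simp: S_def fixed_def)
  qed
  obtain i where "i \<in> S"
    using \<open>fixed y \<noteq> {}\<close> by (auto simp: S_def)
  then have "i < d"
    using partition_lengths[OF P \<open>y \<in> F\<close>] by (simp add: S_def fixed_def)
  have "0 = sum (character S) (cube d)"
    using \<open>i \<in> S\<close> \<open>i < d\<close> by (intro sum_character_subcube_eq_0[symmetric]) (auto simp: S_def)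
  also have "\<dots> = (\<Sum>u\<in>F. if fixed u = S then 2 ^ jokers y * character S u else 0)"
    unfolding sum_over_partition[OF P] by (rule sum.cong) (simp_all add: subcube_sum)
  also have "\<dots> = 2 ^ jokers y * (\<Sum>u | u \<in> F \<and> fixed u = S. character S u)"
    using partition_finite[OF P] by (simp add: sum.inter_filter sum_distrib_left if_distrib cong: if_cong)
  finally show ?thesis
    by (simp add: S_def)
qed

lemma character_same_fixed:
  assumes "fixed z = fixed y" and "length z = length y"
  shows "character (fixed y) z = (-1) ^ dist y z * character (fixed y) y"
proof -
  define Y where "Y = {i\<in>fixed y. y ! i = One}"
  define Z where "Z = {i\<in>fixed y. z ! i = One}"
  have "i \<in> conflicts y z \<longleftrightarrow> i \<in> (Y - Z) \<union> (Z - Y)" for i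
  proof (cases "i \<in> fixed y")
    case True
    then have "i < length y" and "y ! i \<noteq> Joker" and "z ! i \<noteq> Joker"
      using assms(1) by (auto simp: fixed_def)
    then show ?thesis
      using True assms(2) by (auto simp: conflicts_def Y_def Z_def opposite_def sym_neq_Joker_iff)
  next
    case False
    then have "i \<notin> conflicts y z"
      using assms by (auto simp: conflicts_def fixed_def opposite_def)
    then show ?thesis
      using False by (simp add: Y_def Z_def)
  qed
  then have "conflicts y z = (Y - Z) \<union> (Z - Y)"
    by blast
  then have "dist y z = card (Y - Z) + card (Z - Y)"
    unfolding dist_eq_card_conflicts by (simp only:) (rule card_Un_disjoint; auto simp: Y_def Z_def)
  moreover have "card Y = card (Y \<inter> Z) + card (Y - Z)"
    by (rule card_Int_Diff) (simp add: Y_def)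
  moreover have "card Z = card (Y \<inter> Z) + card (Z - Y)"
    unfolding Int_commute[of Y Z] by (rule card_Int_Diff) (simp add: Z_def)
  moreover have "(-1::int) ^ (2 * card (Y - Z)) = 1"
    by (simp add: power_mult)
  ultimately have "(-1::int) ^ card Z = (-1) ^ dist y z * (-1) ^ card Y"
    by (simp add: power_add flip: power_mult)
  then show ?thesis
    by (simp add: character_def Y_def Z_def)
qed

lemma conflicts_eq_singleton_imp_flip:
  assumes "fixed z = fixed y" and "length z = length y" and "conflicts y z = {i}"
  shows "z = y[i := flip (y ! i)]"
proof (rule nth_equalityI)
  show "length z = length (y[i := flip (y ! i)])"
    using assms(2) by simp
  fix j
  assume "j < length z"
  show "z ! j = y[i := flip (y ! i)] ! j"
  proof (cases "j = i")
    case True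
    then have "j < length y" and "opposite (y ! j) (z ! j)"
      using assms(3) by (auto simp: conflicts_def)
    then show ?thesis
      using True by (auto simp: opposite_def)
  next
    case False
    then have "\<not> opposite (y ! j) (z ! j)" and "y ! j = Joker \<longleftrightarrow> z ! j = Joker"
      using assms \<open>j < length z\<close> by (auto simp: conflicts_def fixed_def set_eq_iff)
    then show ?thesis
      using False by (cases "y ! j"; cases "z ! j") (auto simp: opposite_def)
  qed
qed

lemma sum_eq_0_imp_ex_neq:
  fixes f :: "'a \<Rightarrow> 'b::{semiring_char_0, semiring_no_zero_divisors}"
  assumes "finite A" and "a \<in> A" and "f a \<noteq> 0" and "sum f A = 0"
  shows "\<exists>b\<in>A. f b \<noteq> f a"
proof (rule ccontr)
  assume "\<not> (\<exists>b\<in>A. f b \<noteq> f a)"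
  then have "sum f A = of_nat (card A) * f a"
    by simp
  moreover have "card A \<noteq> 0"
    using assms(1,2) by auto
  ultimately show False
    using assms(3,4) by simp
qed

lemma partition_has_flipped_pair:
  assumes P: "is_partition k d F" and "k \<le> 2" and "2 \<le> card F"
  shows "\<exists>y\<in>F. \<exists>i<d. y ! i \<noteq> Joker \<and> y[i := flip (y ! i)] \<in> F"
proof -
  have "finite F" and "F \<noteq> {}"
    using partition_finite[OF P] assms(3) by auto
  then obtain y where "y \<in> F" and min: "\<And>u. u \<in> F \<Longrightarrow> jokers y \<le> jokers u"
    using ex_has_least_nat[of "\<lambda>u. u \<in> F" _ jokers] by blast
  define S where "S = fixed y"
  have "S \<noteq> {}"
    using partition_fixed_nonempty[OF P assms(3) \<open>y \<in> F\<close>] by (simp add: S_def)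
  have sum_0: "(\<Sum>u | u \<in> F \<and> fixed u = S. character S u) = 0"
    using partition_character_sum_eq_0[OF P \<open>y \<in> F\<close> min] \<open>S \<noteq> {}\<close> by (simp add: S_def)
  obtain z where "z \<in> F" and "fixed z = S" and "character S z \<noteq> character S y"
    using sum_eq_0_imp_ex_neq[of "{u \<in> F. fixed u = S}" y "character S"] sum_0 \<open>finite F\<close> \<open>y \<in> F\<close>
    by (auto simp: S_def)
  have "length z = length y"
    using partition_lengths[OF P] \<open>y \<in> F\<close> \<open>z \<in> F\<close> by simp
  have "y \<noteq> z"
    using \<open>character S z \<noteq> character S y\<close> by blast
  then have "dist y z \<le> 2"
    using partition_conflicts[OF P \<open>y \<in> F\<close> \<open>z \<in> F\<close>] assms(2) by (simp add: dist_eq_card_conflicts)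
  moreover have "odd (dist y z)"
    using character_same_fixed[of z y] \<open>length z = length y\<close> \<open>fixed z = S\<close>
      \<open>character S z \<noteq> character S y\<close> by (auto simp: S_def)
  ultimately have "card (conflicts y z) = 1"
    unfolding dist_eq_card_conflicts by presburger
  then obtain i where "conflicts y z = {i}"
    by (rule card_1_singletonE)
  then have "i \<in> conflicts y z"
    by simp
  then have "i < d" and "y ! i \<noteq> Joker"
    using partition_lengths[OF P \<open>y \<in> F\<close>] by (auto simp: conflicts_def opposite_def)
  moreover have "y[i := flip (y ! i)] \<in> F"
    using conflicts_eq_singleton_imp_flip[of z y i] \<open>conflicts y z = {i}\<close> \<open>fixed z = S\<close>
      \<open>length z = length y\<close> \<open>z \<in> F\<close> by (simp add: S_def)
  ultimately show ?thesis
    using \<open>y \<in> F\<close> by blast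
qed

lemma conflicts_update_Joker: "conflicts (y[i := Joker]) u = conflicts y u - {i}"
  by (cases "i < length y") (auto simp: conflicts_def opposite_def nth_list_update)

lemma conflicts_merge:
  assumes "conflicts y u \<noteq> {}" and "conflicts (y[i := flip (y ! i)]) u \<noteq> {}"
  shows "conflicts (y[i := Joker]) u \<noteq> {}"
proof
  assume merged: "conflicts (y[i := Joker]) u = {}"
  then have "conflicts y u = {i}"
    using assms(1) by (auto simp: conflicts_update_Joker)
  moreover have "conflicts (y[i := flip (y ! i)]) u = {i}"
    using assms(2) merged conflicts_update_Joker[of "y[i := flip (y ! i)]" i u] by auto
  ultimately have "i \<in> conflicts y u" and "i \<in> conflicts (y[i := flip (y ! i)]) u"
    by simp_all
  then have "opposite (y ! i) (u ! i)" and "opposite (flip (y ! i)) (u ! i)"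
    by (auto simp: conflicts_def)
  then show False
    by (rule not_opposite_both_flip)
qed

lemma neighborly_merge:
  fixes y :: "sym list" and i :: nat
  defines "z \<equiv> y[i := flip (y ! i)]" and "w \<equiv> y[i := Joker]"
  assumes P: "is_partition k d F" and "y \<in> F" and "z \<in> F"
  shows "neighborly k d (insert w (F - {y, z}))"
  unfolding neighborly_def
proof (intro conjI ballI impI)
  show "insert w (F - {y, z}) \<subseteq> strings d"
    using partition_lengths[OF P] \<open>y \<in> F\<close> by (auto simp: strings_def w_def)
  have w_conflicts: "conflicts w u \<noteq> {} \<and> card (conflicts w u) \<le> k" if "u \<in> F - {y, z}" for u
  proof -
    have "conflicts y u \<noteq> {}" and "card (conflicts y u) \<le> k" and "conflicts z u \<noteq> {}"
      using that partition_conflicts[OF P \<open>y \<in> F\<close>] partition_conflicts[OF P \<open>z \<in> F\<close>] by auto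
    moreover have "card (conflicts w u) \<le> card (conflicts y u)"
      by (simp add: w_def conflicts_update_Joker card_mono)
    ultimately show ?thesis
      using conflicts_merge[of y u i] by (simp add: w_def z_def)
  qed
  fix a b
  assume "a \<in> insert w (F - {y, z})" and "b \<in> insert w (F - {y, z})" and "a \<noteq> b"
  then consider "a \<in> F" and "b \<in> F" | "a = w" and "b \<in> F - {y, z}" | "b = w" and "a \<in> F - {y, z}"
    by auto
  then have "conflicts a b \<noteq> {} \<and> card (conflicts a b) \<le> k"
  proof cases
    case 1
    then show ?thesis
      using \<open>a \<noteq> b\<close> partition_conflicts[OF P] by blast
  next
    case 2
    then show ?thesis
      using w_conflicts by blast
  next
    case 3
    then show ?thesis
      using w_conflicts conflicts_commute[of a w] by simp
  qed
  then show "1 \<le> dist a b" and "dist a b \<le> k"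
    using one_le_dist_iff[of a b] by (simp_all add: dist_eq_card_conflicts)
qed

lemma partition_merge:
  fixes y :: "sym list" and i :: nat
  defines "z \<equiv> y[i := flip (y ! i)]" and "w \<equiv> y[i := Joker]"
  assumes P: "is_partition k d F" and "y \<in> F" and "z \<in> F" and "i < d" and "y ! i \<noteq> Joker"
  shows "is_partition k d (insert w (F - {y, z}))" and "card (insert w (F - {y, z})) = card F - 1"
proof -
  have "finite F" and "length y = d"
    using partition_finite[OF P] partition_lengths[OF P \<open>y \<in> F\<close>] by simp_all
  have "z \<noteq> y"
    using update_flip_neq \<open>length y = d\<close> \<open>i < d\<close> \<open>y ! i \<noteq> Joker\<close> by (simp add: z_def)
  have "w \<noteq> y"
    using \<open>length y = d\<close> \<open>i < d\<close> \<open>y ! i \<noteq> Joker\<close> by (metis nth_list_update_eq w_def)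
  have "w \<notin> F"
    using partition_conflicts[OF P _ \<open>y \<in> F\<close> \<open>w \<noteq> y\<close>] by (auto simp: w_def conflicts_update_Joker)
  have "(\<Sum>x\<in>insert w (F - {y, z}). (2::nat) ^ jokers x) = 2 ^ jokers w + (\<Sum>x\<in>F - {y, z}. 2 ^ jokers x)"
    using \<open>finite F\<close> \<open>w \<notin> F\<close> by simp
  also have "\<dots> = (\<Sum>x\<in>F. 2 ^ jokers x)"
    using \<open>finite F\<close> \<open>y \<in> F\<close> \<open>z \<in> F\<close> \<open>z \<noteq> y\<close> \<open>length y = d\<close> \<open>i < d\<close> \<open>y ! i \<noteq> Joker\<close>
    by (simp add: sum.subset_diff[of "{y, z}" F] w_def z_def jokers_update_Joker jokers_update_flip)
  finally show "is_partition k d (insert w (F - {y, z}))"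
    using P neighborly_merge[OF P \<open>y \<in> F\<close>] \<open>z \<in> F\<close> by (simp add: is_partition_def w_def z_def)
  show "card (insert w (F - {y, z})) = card F - 1"
    using \<open>finite F\<close> \<open>w \<notin> F\<close> \<open>y \<in> F\<close> \<open>z \<in> F\<close> \<open>z \<noteq> y\<close> card_mono[OF \<open>finite F\<close>, of "{y, z}"]
    by (simp add: card_Diff_subset)
qed

lemma partition_has_fixed_coordinate:
  assumes "is_partition k d F" and "k \<le> 2" and "2 \<le> card F"
  shows "\<exists>j<d. \<forall>x\<in>F. x ! j \<noteq> Joker"
  using assms
proof (induction "card F" arbitrary: F rule: less_induct)
  case less
  then obtain y i where "y \<in> F" and "i < d" and "y ! i \<noteq> Joker" and "y[i := flip (y ! i)] \<in> F"
    using partition_has_flipped_pair by blast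
  define z where "z = y[i := flip (y ! i)]"
  define w where "w = y[i := Joker]"
  define F' where "F' = insert w (F - {y, z})"
  have "is_partition k d F'" and "card F' = card F - 1"
    using partition_merge[OF less.prems(1) \<open>y \<in> F\<close> _ \<open>i < d\<close> \<open>y ! i \<noteq> Joker\<close>]
      \<open>y[i := flip (y ! i)] \<in> F\<close> by (simp_all add: F'_def w_def z_def)
  have "z \<in> F"
    using \<open>y[i := flip (y ! i)] \<in> F\<close> by (simp add: z_def)
  have "i < length y"
    using partition_lengths[OF less.prems(1) \<open>y \<in> F\<close>] \<open>i < d\<close> by simp
  show ?case
  proof (cases "2 \<le> card F'")
    case True
    moreover have "card F' < card F"
      using \<open>card F' = card F - 1\<close> less.prems(3) by simp
    ultimately obtain j where "j < d" and j: "\<forall>x\<in>F'. x ! j \<noteq> Joker"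
      using less.hyps \<open>is_partition k d F'\<close> less.prems(2) by blast
    have "w ! j \<noteq> Joker"
      using j by (simp add: F'_def)
    then have "j \<noteq> i" and "y ! j \<noteq> Joker" and "z ! j \<noteq> Joker"
      using \<open>i < length y\<close> by (auto simp: w_def z_def nth_list_update split: if_splits)
    then have "\<forall>x\<in>F. x ! j \<noteq> Joker"
      using j by (auto simp: F'_def)
    then show ?thesis
      using \<open>j < d\<close> by blast
  next
    case False
    have "z \<noteq> y"
      using update_flip_neq \<open>i < length y\<close> \<open>y ! i \<noteq> Joker\<close> by (simp add: z_def)
    then have "F = {y, z}"
      using False \<open>card F' = card F - 1\<close> \<open>y \<in> F\<close> \<open>z \<in> F\<close> partition_finite[OF less.prems(1)]
      by (intro card_seteq[symmetric]) auto
    moreover have "z ! i \<noteq> Joker"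
      using \<open>i < length y\<close> \<open>y ! i \<noteq> Joker\<close> by (simp add: z_def)
    ultimately show ?thesis
      using \<open>i < d\<close> \<open>y ! i \<noteq> Joker\<close> by blast
  qed
qed

theorem proposition4:
  fixes k d :: nat and F :: "sym list set"
  assumes "1 \<le> k" and "k \<le> 2"
    and "is_partition k d F"
    and "card F \<ge> 2"
  shows "lamination k d F"
  using partition_has_fixed_coordinate[OF assms(3,2,4)] assms(3)
  by (simp add: lamination_def sym_neq_Joker_iff)

end
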